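(* Let $\mathcal{G}$ be a groupoid and $K$ a commutative ring with unit. The $K$-SAC $K\mathcal{G}$ has a filtration $\{F_nK\mathcal{G}(p_0,p_1)\}_{n\ge0}$, $p_0,p_1\in\operatorname{Ob}\mathcal{G}$, such that $F_nK\mathcal{G}(q,q)=I\mathcal{G}(q,q)^n$ for all $q$ and $n\ge0$. The filtered $K$-SAC $K\mathcal{G}$ satisfies conditions (C1) and (C4).
   Context: $K\mathcal{G}$ has the same objects as $\mathcal{G}$ and $K\mathcal{G}(p_0,p_1)$ the free $K$-module on $\mathcal{G}(p_0,p_1)$, with bilinearly extended multiplication $\gamma_1\gamma_2:=\gamma_2\circ\gamma_1$. $I\mathcal{G}(q,q)$ is the augmentation ideal (kernel of $\sum a_i\gamma_i\mapsto\sum a_i$) of the group ring $K\mathcal{G}(q,q)$. A filtration on a $K$-SAC $\mathcal{R}$ (a small additive category with $K$-module hom-sets, $K$-bilinear multiplication, and an isomorphism in every non-zero hom-set) is a choice of $K$-submodules $\mathcal{R}(p_0,p_1)=F_0\supset F_1\supset\cdots$ with $F_{n_1}\mathcal{R}(p_0,p_1)\cdot F_{n_2}\mathcal{R}(p_1,p_2)\subset F_{n_1+n_2}\mathcal{R}(p_0,p_2)$. (C1): $\mathcal{R}(q,q)/F_1\mathcal{R}(q,q)\cong K$ for every object $q$. (C4): the multiplication $F_1\mathcal{R}(q,q)^{\otimes n}\to F_n\mathcal{R}(q,q)$ is surjective for every $q$ and $n\ge1$. *)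

theory Defs
  imports Main
begin

definition groupoid ::
  "'o set \<Rightarrow> 'm set \<Rightarrow> ('m \<Rightarrow> 'o) \<Rightarrow> ('m \<Rightarrow> 'o) \<Rightarrow> ('m \<Rightarrow> 'm \<Rightarrow> 'm) \<Rightarrow> ('o \<Rightarrow> 'm) \<Rightarrow> bool"
where
  "groupoid Obj Mor src tgt cmp ide \<longleftrightarrow>
     (\<forall>f\<in>Mor. src f \<in> Obj \<and> tgt f \<in> Obj) \<and>
     (\<forall>f\<in>Mor. \<forall>g\<in>Mor. tgt f = src g \<longrightarrow>
         cmp g f \<in> Mor \<and> src (cmp g f) = src f \<and> tgt (cmp g f) = tgt g) \<and>
     (\<forall>f\<in>Mor. \<forall>g\<in>Mor. \<forall>h\<in>Mor. tgt f = src g \<longrightarrow> tgt g = src h \<longrightarrow>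
         cmp h (cmp g f) = cmp (cmp h g) f) \<and>
     (\<forall>p\<in>Obj. ide p \<in> Mor \<and> src (ide p) = p \<and> tgt (ide p) = p) \<and>
     (\<forall>f\<in>Mor. cmp f (ide (src f)) = f \<and> cmp (ide (tgt f)) f = f) \<and>
     (\<forall>f\<in>Mor. \<exists>g\<in>Mor. src g = tgt f \<and> tgt g = src f \<and>
         cmp g f = ide (src f) \<and> cmp f g = ide (tgt f))"

definition hom :: "'m set \<Rightarrow> ('m \<Rightarrow> 'o) \<Rightarrow> ('m \<Rightarrow> 'o) \<Rightarrow> 'o \<Rightarrow> 'o \<Rightarrow> 'm set" where
  "hom Mor src tgt p0 p1 = {f \<in> Mor. src f = p0 \<and> tgt f = p1}"

definition supp :: "('m \<Rightarrow> 'k::zero) \<Rightarrow> 'm set" where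
  "supp a = {g. a g \<noteq> 0}"

text \<open>KG(p0,p1): the free K-module on G(p0,p1), realised as finitely supported
  K-valued functions supported in G(p0,p1).\<close>
definition KG :: "'m set \<Rightarrow> ('m \<Rightarrow> 'o) \<Rightarrow> ('m \<Rightarrow> 'o) \<Rightarrow> 'o \<Rightarrow> 'o \<Rightarrow> ('m \<Rightarrow> 'k::zero) set" where
  "KG Mor src tgt p0 p1 = {a. finite (supp a) \<and> supp a \<subseteq> hom Mor src tgt p0 p1}"

text \<open>Bilinearly extended multiplication with gamma1 gamma2 := gamma2 o gamma1.\<close>
definition kmult :: "('m \<Rightarrow> 'o) \<Rightarrow> ('m \<Rightarrow> 'o) \<Rightarrow> ('m \<Rightarrow> 'm \<Rightarrow> 'm)
    \<Rightarrow> ('m \<Rightarrow> 'k::comm_ring_1) \<Rightarrow> ('m \<Rightarrow> 'k) \<Rightarrow> ('m \<Rightarrow> 'k)" where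
  "kmult src tgt cmp a b = (\<lambda>h. \<Sum>(g1, g2) \<in> {(g1, g2). g1 \<in> supp a \<and> g2 \<in> supp b \<and>
        tgt g1 = src g2 \<and> cmp g2 g1 = h}. a g1 * b g2)"

definition kunit :: "('o \<Rightarrow> 'm) \<Rightarrow> 'o \<Rightarrow> ('m \<Rightarrow> 'k::comm_ring_1)" where
  "kunit ide q = (\<lambda>g. if g = ide q then 1 else 0)"

definition aug :: "('m \<Rightarrow> 'k::comm_ring_1) \<Rightarrow> 'k" where
  "aug a = (\<Sum>g\<in>supp a. a g)"

definition aug_ideal :: "'m set \<Rightarrow> ('m \<Rightarrow> 'o) \<Rightarrow> ('m \<Rightarrow> 'o) \<Rightarrow> 'o \<Rightarrow> ('m \<Rightarrow> 'k::comm_ring_1) set" where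
  "aug_ideal Mor src tgt q = {a \<in> KG Mor src tgt q q. aug a = 0}"

inductive_set add_span :: "('m \<Rightarrow> 'k::comm_ring_1) set \<Rightarrow> ('m \<Rightarrow> 'k) set" for S where
  gen: "x \<in> S \<Longrightarrow> x \<in> add_span S"
| zero: "(\<lambda>_. 0) \<in> add_span S"
| add: "x \<in> add_span S \<Longrightarrow> y \<in> add_span S \<Longrightarrow> (\<lambda>g. x g + y g) \<in> add_span S"
| neg: "x \<in> add_span S \<Longrightarrow> (\<lambda>g. - x g) \<in> add_span S"

fun aug_ideal_pow :: "'m set \<Rightarrow> ('m \<Rightarrow> 'o) \<Rightarrow> ('m \<Rightarrow> 'o) \<Rightarrow> ('m \<Rightarrow> 'm \<Rightarrow> 'm) \<Rightarrow> 'o \<Rightarrow> nat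
    \<Rightarrow> ('m \<Rightarrow> 'k::comm_ring_1) set" where
  "aug_ideal_pow Mor src tgt cmp q 0 = KG Mor src tgt q q"
| "aug_ideal_pow Mor src tgt cmp q (Suc n) =
     add_span {kmult src tgt cmp x y | x y. x \<in> aug_ideal_pow Mor src tgt cmp q n \<and>
                                               y \<in> aug_ideal Mor src tgt q}"

definition is_submodule :: "('m \<Rightarrow> 'k::comm_ring_1) set \<Rightarrow> ('m \<Rightarrow> 'k) set \<Rightarrow> bool" where
  "is_submodule M A \<longleftrightarrow> M \<subseteq> A \<and> (\<lambda>_. 0) \<in> M \<and>
     (\<forall>x\<in>M. \<forall>y\<in>M. (\<lambda>g. x g + y g) \<in> M) \<and>
     (\<forall>c. \<forall>x\<in>M. (\<lambda>g. c * x g) \<in> M)"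

definition is_filtration :: "'o set \<Rightarrow> 'm set \<Rightarrow> ('m \<Rightarrow> 'o) \<Rightarrow> ('m \<Rightarrow> 'o) \<Rightarrow> ('m \<Rightarrow> 'm \<Rightarrow> 'm)
    \<Rightarrow> (nat \<Rightarrow> 'o \<Rightarrow> 'o \<Rightarrow> ('m \<Rightarrow> 'k::comm_ring_1) set) \<Rightarrow> bool" where
  "is_filtration Obj Mor src tgt cmp F \<longleftrightarrow>
     (\<forall>p0\<in>Obj. \<forall>p1\<in>Obj.
        F 0 p0 p1 = KG Mor src tgt p0 p1 \<and>
        (\<forall>n. is_submodule (F n p0 p1) (KG Mor src tgt p0 p1)) \<and>
        (\<forall>n. F (Suc n) p0 p1 \<subseteq> F n p0 p1)) \<and>
     (\<forall>p0\<in>Obj. \<forall>p1\<in>Obj. \<forall>p2\<in>Obj. \<forall>n1 n2. \<forall>a\<in>F n1 p0 p1. \<forall>b\<in>F n2 p1 p2.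
        kmult src tgt cmp a b \<in> F (n1 + n2) p0 p2)"

text \<open>(C1): R(q,q)/F_1 R(q,q) is isomorphic to K as a K-module, i.e. there is a
  surjective K-linear map R(q,q) \<rightarrow> K whose kernel is F_1 R(q,q).\<close>
definition cond_C1 :: "'o set \<Rightarrow> 'm set \<Rightarrow> ('m \<Rightarrow> 'o) \<Rightarrow> ('m \<Rightarrow> 'o)
    \<Rightarrow> (nat \<Rightarrow> 'o \<Rightarrow> 'o \<Rightarrow> ('m \<Rightarrow> 'k::comm_ring_1) set) \<Rightarrow> bool" where
  "cond_C1 Obj Mor src tgt F \<longleftrightarrow>
     (\<forall>q\<in>Obj. \<exists>\<phi> :: ('m \<Rightarrow> 'k) \<Rightarrow> 'k.
        (\<forall>x\<in>KG Mor src tgt q q. \<forall>y\<in>KG Mor src tgt q q. \<phi> (\<lambda>g. x g + y g) = \<phi> x + \<phi> y) \<and>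
        (\<forall>c. \<forall>x\<in>KG Mor src tgt q q. \<phi> (\<lambda>g. c * x g) = c * \<phi> x) \<and>
        \<phi> ` KG Mor src tgt q q = UNIV \<and>
        {x \<in> KG Mor src tgt q q. \<phi> x = 0} = F 1 q q)"

text \<open>(C4): the multiplication F_1^{\<otimes>n} \<rightarrow> F_n is surjective, i.e. F_n R(q,q) is
  contained in the additive span of products x1 \<cdots> xn with all xi in F_1 R(q,q)
  (the image of the tensor power).\<close>
definition cond_C4 :: "'o set \<Rightarrow> ('m \<Rightarrow> 'o) \<Rightarrow> ('m \<Rightarrow> 'o) \<Rightarrow> ('m \<Rightarrow> 'm \<Rightarrow> 'm) \<Rightarrow> ('o \<Rightarrow> 'm)
    \<Rightarrow> (nat \<Rightarrow> 'o \<Rightarrow> 'o \<Rightarrow> ('m \<Rightarrow> 'k::comm_ring_1) set) \<Rightarrow> bool" where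
  "cond_C4 Obj src tgt cmp ide F \<longleftrightarrow>
     (\<forall>q\<in>Obj. \<forall>n\<ge>1.
        F n q q \<subseteq> add_span {foldr (kmult src tgt cmp) xs (kunit ide q) | xs.
                              length xs = n \<and> set xs \<subseteq> F 1 q q})"

end

theory Submission imports Defs begin

(* Put F_n(p0,p1) = {a \<in> KG(p0,p1). a b \<in> I(p0)^n for all b \<in> KG(p1,p0)}. Since I(q)^n is a
   right ideal of KG(q,q), F_n(q,q) = I(q)^n. For multiplicativity, if G(p0,p1) is nonempty, a
   morphism p0 \<rightarrow> p1 and its inverse give basis elements e, e' with e e' = 1 and e' e = 1, and
   (a a') b = (a e') (e (a' (b e)) e'); conjugation by e maps I(p1)^n into I(p0)^n because the
   augmentation is multiplicative. The augmentation itself witnesses (C1), and (C4) holds because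
   I(q)^(n+1) is by definition spanned by products of an element of I(q)^n and one of I(q). *)

lemma supp_add_subset: "supp (\<lambda>g. x g + (y g::'k::comm_ring_1)) \<subseteq> supp x \<union> supp y"
  by (auto simp: supp_def)

lemma supp_scale_subset: "supp (\<lambda>g. c * (x g::'k::comm_ring_1)) \<subseteq> supp x"
  by (auto simp: supp_def)

lemma finite_supp_add:
  "finite (supp x) \<Longrightarrow> finite (supp y) \<Longrightarrow> finite (supp (\<lambda>g. x g + (y g::'k::comm_ring_1)))"
  by (rule finite_subset[OF supp_add_subset]) simp

lemma supp_uminus [simp]: "supp (\<lambda>g. - (x g::'k::comm_ring_1)) = supp x"
  by (auto simp: supp_def)

lemma supp_zero [simp]: "supp (\<lambda>_. 0) = {}"
  by (auto simp: supp_def)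

lemma sum_if_unique:
  assumes "finite U" "x \<in> U" "\<And>k. P k \<Longrightarrow> k = x"
  shows "(\<Sum>k\<in>U. if P k then f k else 0) = (if P x then f x else (0::'a::comm_monoid_add))"
proof -
  have "(\<Sum>k\<in>U - {x}. if P k then f k else 0) = 0"
    by (rule sum.neutral) (auto dest: assms(3))
  then show ?thesis
    using sum.remove[OF assms(1,2), of "\<lambda>k. if P k then f k else 0"] by simp
qed

subsection \<open>Additive spans\<close>

lemma add_span_minimal:
  assumes "S \<subseteq> M" "(\<lambda>_. 0) \<in> M"
    "\<And>x y. x \<in> M \<Longrightarrow> y \<in> M \<Longrightarrow> (\<lambda>g. x g + y g) \<in> M"
    "\<And>x. x \<in> M \<Longrightarrow> (\<lambda>g. - x g) \<in> M"
  shows "add_span S \<subseteq> M"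
proof
  fix x assume "x \<in> add_span S"
  then show "x \<in> M"
    by induction (use assms in auto)
qed

definition finsupp_additive :: "(('m \<Rightarrow> 'k::comm_ring_1) \<Rightarrow> ('n \<Rightarrow> 'k)) \<Rightarrow> bool" where
  "finsupp_additive f \<longleftrightarrow> (\<forall>x y. finite (supp x) \<longrightarrow> finite (supp y) \<longrightarrow>
     f (\<lambda>g. x g + y g) = (\<lambda>h. f x h + f y h))"

lemma finsupp_additive_zero:
  assumes "finsupp_additive f" shows "f (\<lambda>_. 0) = (\<lambda>_. 0)"
proof -
  have "f (\<lambda>_. 0) = (\<lambda>h. f (\<lambda>_. 0) h + f (\<lambda>_. 0) h)"
    using assms[unfolded finsupp_additive_def, rule_format, of "\<lambda>_. 0" "\<lambda>_. 0"] by simp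
  then show ?thesis
    by (simp add: fun_eq_iff)
qed

lemma finsupp_additive_uminus:
  assumes "finsupp_additive f" "finite (supp x)" shows "f (\<lambda>g. - x g) = (\<lambda>h. - f x h)"
proof -
  have "(\<lambda>h. f x h + f (\<lambda>g. - x g) h) = f (\<lambda>g. x g + - x g)"
    using assms(1)[unfolded finsupp_additive_def, rule_format, of x "\<lambda>g. - x g"] assms(2) by simp
  also have "\<dots> = (\<lambda>_. 0)"
    using finsupp_additive_zero[OF assms(1)] by simp
  finally show ?thesis
    by (simp add: fun_eq_iff add_eq_0_iff)
qed

lemma add_span_image:
  assumes f: "finsupp_additive f" and x: "x \<in> add_span S"
    and fin: "\<And>s. s \<in> S \<Longrightarrow> finite (supp s)" and img: "\<And>s. s \<in> S \<Longrightarrow> f s \<in> add_span T"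
  shows "f x \<in> add_span T"
proof -
  from x have "finite (supp x) \<and> f x \<in> add_span T"
  proof induction
    case (gen x)
    then show ?case using fin img by blast
  next
    case zero
    then show ?case by (simp add: finsupp_additive_zero[OF f] add_span.zero)
  next
    case (add x y)
    then show ?case
      using f[unfolded finsupp_additive_def, rule_format, of x y] by (simp add: finite_supp_add add_span.add)
  next
    case (neg x)
    then show ?case by (simp add: finsupp_additive_uminus[OF f] add_span.neg)
  qed
  then show ?thesis ..
qed

subsection \<open>The convolution product\<close>

lemma kmult_eq_sum:
  fixes a b :: "'m \<Rightarrow> 'k::comm_ring_1"
  assumes "finite S" "finite T" "supp a \<subseteq> S" "supp b \<subseteq> T"
  shows "kmult src tgt cmp a b h =
    (\<Sum>g1\<in>S. \<Sum>g2\<in>T. if tgt g1 = src g2 \<and> cmp g2 g1 = h then a g1 * b g2 else 0)"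
proof -
  let ?D = "{(g1, g2). g1 \<in> supp a \<and> g2 \<in> supp b \<and> tgt g1 = src g2 \<and> cmp g2 g1 = h}"
  let ?f = "\<lambda>(g1, g2). if tgt g1 = src g2 \<and> cmp g2 g1 = h then a g1 * b g2 else 0"
  have "(\<Sum>g1\<in>S. \<Sum>g2\<in>T. ?f (g1, g2)) = (\<Sum>p\<in>S \<times> T. ?f p)"
    by (simp add: sum.cartesian_product)
  also have "\<dots> = (\<Sum>p\<in>?D. ?f p)"
    by (rule sum.mono_neutral_right) (use assms in \<open>auto simp: supp_def split: if_splits\<close>)
  also have "\<dots> = (\<Sum>(g1, g2)\<in>?D. a g1 * b g2)"
    by (rule sum.cong) auto
  finally show ?thesis
    by (simp add: kmult_def)
qed

lemma kmult_add_left: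
  fixes x y b :: "'m \<Rightarrow> 'k::comm_ring_1"
  assumes "finite (supp x)" "finite (supp y)" "finite (supp b)"
  shows "kmult src tgt cmp (\<lambda>g. x g + y g) b = (\<lambda>h. kmult src tgt cmp x b h + kmult src tgt cmp y b h)"
proof
  fix h
  have S: "finite (supp x \<union> supp y)" using assms by simp
  show "kmult src tgt cmp (\<lambda>g. x g + y g) b h = kmult src tgt cmp x b h + kmult src tgt cmp y b h"
    unfolding kmult_eq_sum[OF S assms(3) supp_add_subset order_refl]
      kmult_eq_sum[OF S assms(3) Un_upper1 order_refl] kmult_eq_sum[OF S assms(3) Un_upper2 order_refl]
    by (auto simp: sum.distrib[symmetric] distrib_right intro!: sum.cong)
qed

lemma kmult_add_right:
  fixes x y a :: "'m \<Rightarrow> 'k::comm_ring_1"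
  assumes "finite (supp x)" "finite (supp y)" "finite (supp a)"
  shows "kmult src tgt cmp a (\<lambda>g. x g + y g) = (\<lambda>h. kmult src tgt cmp a x h + kmult src tgt cmp a y h)"
proof
  fix h
  have S: "finite (supp x \<union> supp y)" using assms by simp
  show "kmult src tgt cmp a (\<lambda>g. x g + y g) h = kmult src tgt cmp a x h + kmult src tgt cmp a y h"
    unfolding kmult_eq_sum[OF assms(3) S order_refl supp_add_subset]
      kmult_eq_sum[OF assms(3) S order_refl Un_upper1] kmult_eq_sum[OF assms(3) S order_refl Un_upper2]
    by (auto simp: sum.distrib[symmetric] distrib_left intro!: sum.cong)
qed

lemma kmult_scale_left:
  fixes x b :: "'m \<Rightarrow> 'k::comm_ring_1"
  assumes "finite (supp x)" "finite (supp b)"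
  shows "kmult src tgt cmp (\<lambda>g. c * x g) b = (\<lambda>h. c * kmult src tgt cmp x b h)"
proof
  fix h
  show "kmult src tgt cmp (\<lambda>g. c * x g) b h = c * kmult src tgt cmp x b h"
    unfolding kmult_eq_sum[OF assms supp_scale_subset order_refl] kmult_eq_sum[OF assms order_refl order_refl]
    by (auto simp: sum_distrib_left mult.assoc intro!: sum.cong)
qed

lemma kmult_scale_right:
  fixes x a :: "'m \<Rightarrow> 'k::comm_ring_1"
  assumes "finite (supp a)" "finite (supp x)"
  shows "kmult src tgt cmp a (\<lambda>g. c * x g) = (\<lambda>h. c * kmult src tgt cmp a x h)"
proof
  fix h
  show "kmult src tgt cmp a (\<lambda>g. c * x g) h = c * kmult src tgt cmp a x h"
    unfolding kmult_eq_sum[OF assms order_refl supp_scale_subset] kmult_eq_sum[OF assms order_refl order_refl]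
    by (auto simp: sum_distrib_left mult.left_commute intro!: sum.cong)
qed

lemma kmult_zero_left [simp]: "kmult src tgt cmp (\<lambda>_. 0) b = (\<lambda>_. (0::'k::comm_ring_1))"
  by (simp add: kmult_def)

lemma finsupp_additive_kmult_left: "finite (supp b) \<Longrightarrow> finsupp_additive (\<lambda>a. kmult src tgt cmp a b)"
  by (simp add: finsupp_additive_def kmult_add_left)

lemma finsupp_additive_kmult_right: "finite (supp a) \<Longrightarrow> finsupp_additive (\<lambda>b. kmult src tgt cmp a b)"
  by (simp add: finsupp_additive_def kmult_add_right)

lemma kmult_suppE:
  assumes "h \<in> supp (kmult src tgt cmp a b)"
  obtains g1 g2 where "g1 \<in> supp a" "g2 \<in> supp b" "tgt g1 = src g2" "h = cmp g2 g1"
proof -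
  from assms have "kmult src tgt cmp a b h \<noteq> 0"
    by (simp add: supp_def)
  then have "{(g1, g2). g1 \<in> supp a \<and> g2 \<in> supp b \<and> tgt g1 = src g2 \<and> cmp g2 g1 = h} \<noteq> {}"
    unfolding kmult_def by force
  then show thesis
    using that by blast
qed

lemma supp_kmult_subset:
  "supp (kmult src tgt cmp a b) \<subseteq> (\<lambda>(g1, g2). cmp g2 g1) ` (supp a \<times> supp b)"
  by (auto elim!: kmult_suppE)

lemma finite_supp_kmult:
  "finite (supp a) \<Longrightarrow> finite (supp b) \<Longrightarrow> finite (supp (kmult src tgt cmp a b))"
  by (rule finite_subset[OF supp_kmult_subset]) simp

lemma aug_eq_sum:
  fixes a :: "'m \<Rightarrow> 'k::comm_ring_1"
  assumes "finite S" "supp a \<subseteq> S"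
  shows "aug a = (\<Sum>g\<in>S. a g)"
  unfolding aug_def by (rule sum.mono_neutral_left) (use assms in \<open>auto simp: supp_def\<close>)

lemma aug_add:
  fixes x y :: "'m \<Rightarrow> 'k::comm_ring_1"
  assumes "finite (supp x)" "finite (supp y)"
  shows "aug (\<lambda>g. x g + y g) = aug x + aug y"
proof -
  have S: "finite (supp x \<union> supp y)" using assms by simp
  show ?thesis
    using aug_eq_sum[OF S supp_add_subset] aug_eq_sum[OF S Un_upper1] aug_eq_sum[OF S Un_upper2]
    by (simp add: sum.distrib)
qed

lemma aug_scale:
  fixes x :: "'m \<Rightarrow> 'k::comm_ring_1"
  assumes "finite (supp x)"
  shows "aug (\<lambda>g. c * x g) = c * aug x"
  using aug_eq_sum[OF assms supp_scale_subset] aug_eq_sum[OF assms order_refl]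
  by (simp add: sum_distrib_left)

lemma aug_uminus: "aug (\<lambda>g. - x g) = - aug (x :: 'm \<Rightarrow> 'k::comm_ring_1)"
  by (simp add: aug_def sum_negf)

subsection \<open>The linearised groupoid\<close>

locale small_groupoid =
  fixes Obj :: "'o set" and Mor :: "'m set" and src tgt :: "'m \<Rightarrow> 'o"
    and cmp :: "'m \<Rightarrow> 'm \<Rightarrow> 'm" and ide :: "'o \<Rightarrow> 'm"
  assumes groupoid: "groupoid Obj Mor src tgt cmp ide"
begin

lemma cmp_in_Mor: "f \<in> Mor \<Longrightarrow> g \<in> Mor \<Longrightarrow> tgt f = src g \<Longrightarrow> cmp g f \<in> Mor"
  and src_cmp: "f \<in> Mor \<Longrightarrow> g \<in> Mor \<Longrightarrow> tgt f = src g \<Longrightarrow> src (cmp g f) = src f"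
  and tgt_cmp: "f \<in> Mor \<Longrightarrow> g \<in> Mor \<Longrightarrow> tgt f = src g \<Longrightarrow> tgt (cmp g f) = tgt g"
  and cmp_assoc: "f \<in> Mor \<Longrightarrow> g \<in> Mor \<Longrightarrow> h \<in> Mor \<Longrightarrow> tgt f = src g \<Longrightarrow> tgt g = src h \<Longrightarrow>
    cmp h (cmp g f) = cmp (cmp h g) f"
  and ide_in_Mor: "p \<in> Obj \<Longrightarrow> ide p \<in> Mor"
  and src_ide: "p \<in> Obj \<Longrightarrow> src (ide p) = p"
  and tgt_ide: "p \<in> Obj \<Longrightarrow> tgt (ide p) = p"
  and cmp_ide_src: "f \<in> Mor \<Longrightarrow> cmp f (ide (src f)) = f"
  and cmp_ide_tgt: "f \<in> Mor \<Longrightarrow> cmp (ide (tgt f)) f = f"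
  and inverse_exists: "f \<in> Mor \<Longrightarrow> \<exists>g\<in>Mor. src g = tgt f \<and> tgt g = src f \<and>
    cmp g f = ide (src f) \<and> cmp f g = ide (tgt f)"
  using groupoid unfolding groupoid_def by blast+

abbreviation R :: "'o \<Rightarrow> 'o \<Rightarrow> ('m \<Rightarrow> 'k::comm_ring_1) set" where
  "R \<equiv> KG Mor src tgt"

abbreviation kprod :: "('m \<Rightarrow> 'k::comm_ring_1) \<Rightarrow> ('m \<Rightarrow> 'k) \<Rightarrow> ('m \<Rightarrow> 'k)" (infixl "\<star>" 70) where
  "a \<star> b \<equiv> kmult src tgt cmp a b"

lemma finite_supp_R: "a \<in> R p0 p1 \<Longrightarrow> finite (supp a)"
  by (simp add: KG_def)

lemma supp_R: "a \<in> R p0 p1 \<Longrightarrow> g \<in> supp a \<Longrightarrow> g \<in> Mor \<and> src g = p0 \<and> tgt g = p1"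
  by (auto simp: KG_def hom_def)

lemma R_zero: "(\<lambda>_. 0) \<in> R p0 p1"
  by (simp add: KG_def)

lemma R_add: "x \<in> R p0 p1 \<Longrightarrow> y \<in> R p0 p1 \<Longrightarrow> (\<lambda>g. x g + y g) \<in> R p0 p1"
  using supp_add_subset[of x y] by (auto simp: KG_def finite_supp_add)

lemma R_scale: "x \<in> R p0 p1 \<Longrightarrow> (\<lambda>g. c * x g) \<in> R p0 p1"
  using supp_scale_subset[of c x] by (auto simp: KG_def intro: finite_subset)

lemma R_uminus: "x \<in> R p0 p1 \<Longrightarrow> (\<lambda>g. - x g) \<in> R p0 p1"
  by (simp add: KG_def)

lemma R_kmult:
  assumes a: "a \<in> R p0 p1" and b: "b \<in> R p1 p2"
  shows "a \<star> b \<in> R p0 p2"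
proof -
  have "supp (a \<star> b) \<subseteq> hom Mor src tgt p0 p2"
  proof
    fix h assume "h \<in> supp (a \<star> b)"
    then obtain g1 g2 where "g1 \<in> supp a" "g2 \<in> supp b" "tgt g1 = src g2" "h = cmp g2 g1"
      by (rule kmult_suppE)
    then show "h \<in> hom Mor src tgt p0 p2"
      using supp_R[OF a] supp_R[OF b] by (auto simp: hom_def cmp_in_Mor src_cmp tgt_cmp)
  qed
  then show ?thesis
    using a b by (simp add: KG_def finite_supp_kmult)
qed

lemma R_eq_zero_if_hom_empty: "hom Mor src tgt p0 p1 = {} \<Longrightarrow> a \<in> R p0 p1 \<Longrightarrow> a = (\<lambda>_. 0)"
  by (auto simp: KG_def supp_def)

text \<open>Associativity is proved for arbitrary finite combinations of morphisms rather than within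
  hom-sets, so that products can be reassociated by simp without tracking objects.\<close>

definition KMor :: "('m \<Rightarrow> 'k::comm_ring_1) set" where
  "KMor = {a. finite (supp a) \<and> supp a \<subseteq> Mor}"

lemma R_subset_KMor: "a \<in> R p0 p1 \<Longrightarrow> a \<in> KMor"
  by (auto simp: KMor_def KG_def hom_def)

lemma KMor_supp: "a \<in> KMor \<Longrightarrow> g \<in> supp a \<Longrightarrow> g \<in> Mor"
  by (auto simp: KMor_def)

lemma KMor_kmult:
  assumes "a \<in> KMor" "b \<in> KMor" shows "a \<star> b \<in> KMor"
proof -
  have "supp (a \<star> b) \<subseteq> Mor"
    using assms by (auto simp: KMor_def elim!: kmult_suppE intro!: cmp_in_Mor)
  then show ?thesis
    using assms by (simp add: KMor_def finite_supp_kmult)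
qed

lemma kmult_kmult_eq_sum_left:
  fixes a b c :: "'m \<Rightarrow> 'k::comm_ring_1"
  assumes a: "a \<in> KMor" and b: "b \<in> KMor" and c: "c \<in> KMor"
  shows "(a \<star> b \<star> c) h = (\<Sum>g1\<in>supp a. \<Sum>g2\<in>supp b. \<Sum>g3\<in>supp c.
    if tgt g1 = src g2 \<and> tgt g2 = src g3 \<and> cmp g3 (cmp g2 g1) = h then a g1 * b g2 * c g3 else 0)"
proof -
  define U where "U = (\<lambda>(g1, g2). cmp g2 g1) ` (supp a \<times> supp b)"
  have fin: "finite (supp a)" "finite (supp b)" "finite (supp c)" "finite U"
    using a b c by (simp_all add: KMor_def U_def)
  have "(a \<star> b \<star> c) h = (\<Sum>k\<in>U. \<Sum>g3\<in>supp c.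
      if tgt k = src g3 \<and> cmp g3 k = h then (a \<star> b) k * c g3 else 0)"
    by (rule kmult_eq_sum[OF fin(4,3) _ order_refl]) (use supp_kmult_subset in \<open>simp add: U_def\<close>)
  also have "\<dots> = (\<Sum>k\<in>U. \<Sum>g3\<in>supp c. \<Sum>g1\<in>supp a. \<Sum>g2\<in>supp b.
      if tgt g1 = src g2 \<and> cmp g2 g1 = k \<and> tgt k = src g3 \<and> cmp g3 k = h then a g1 * b g2 * c g3 else 0)"
    by (auto simp: kmult_eq_sum[OF fin(1,2) order_refl order_refl] sum_distrib_right intro!: sum.cong)
  also have "\<dots> = (\<Sum>g1\<in>supp a. \<Sum>g2\<in>supp b. \<Sum>g3\<in>supp c.  \<Sum>k\<in>U.
      if tgt g1 = src g2 \<and> cmp g2 g1 = k \<and> tgt k = src g3 \<and> cmp g3 k = h then a g1 * b g2 * c g3 else 0)"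
    by (simp only: sum.swap[where A = U] sum.swap[where A = "supp c" and B = "supp a"]
      sum.swap[where A = "supp c" and B = "supp b"])
  also have "\<dots> = (\<Sum>g1\<in>supp a. \<Sum>g2\<in>supp b. \<Sum>g3\<in>supp c.
      if tgt g1 = src g2 \<and> tgt g2 = src g3 \<and> cmp g3 (cmp g2 g1) = h then a g1 * b g2 * c g3 else 0)"
    apply (intro sum.cong refl)
    subgoal for g1 g2 g3
      using KMor_supp[OF a, of g1] KMor_supp[OF b, of g2]
      by (subst sum_if_unique[OF fin(4), of "cmp g2 g1"]) (auto simp: U_def tgt_cmp)
    done
  finally show ?thesis .
qed

lemma kmult_kmult_eq_sum_right:
  fixes a b c :: "'m \<Rightarrow> 'k::comm_ring_1"
  assumes a: "a \<in> KMor" and b: "b \<in> KMor" and c: "c \<in> KMor"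
  shows "(a \<star> (b \<star> c)) h = (\<Sum>g1\<in>supp a. \<Sum>g2\<in>supp b. \<Sum>g3\<in>supp c.
    if tgt g1 = src g2 \<and> tgt g2 = src g3 \<and> cmp (cmp g3 g2) g1 = h then a g1 * b g2 * c g3 else 0)"
proof -
  define V where "V = (\<lambda>(g2, g3). cmp g3 g2) ` (supp b \<times> supp c)"
  have fin: "finite (supp a)" "finite (supp b)" "finite (supp c)" "finite V"
    using a b c by (simp_all add: KMor_def V_def)
  have "(a \<star> (b \<star> c)) h = (\<Sum>g1\<in>supp a. \<Sum>k\<in>V.
      if tgt g1 = src k \<and> cmp k g1 = h then a g1 * (b \<star> c) k else 0)"
    by (rule kmult_eq_sum[OF fin(1,4) order_refl]) (use supp_kmult_subset in \<open>simp add: V_def\<close>)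
  also have "\<dots> = (\<Sum>g1\<in>supp a. \<Sum>k\<in>V. \<Sum>g2\<in>supp b. \<Sum>g3\<in>supp c.
      if tgt g2 = src g3 \<and> cmp g3 g2 = k \<and> tgt g1 = src k \<and> cmp k g1 = h then a g1 * b g2 * c g3 else 0)"
    by (auto simp: kmult_eq_sum[OF fin(2,3) order_refl order_refl] sum_distrib_left mult.assoc
        intro!: sum.cong)
  also have "\<dots> = (\<Sum>g1\<in>supp a. \<Sum>g2\<in>supp b. \<Sum>g3\<in>supp c. \<Sum>k\<in>V.
      if tgt g2 = src g3 \<and> cmp g3 g2 = k \<and> tgt g1 = src k \<and> cmp k g1 = h then a g1 * b g2 * c g3 else 0)"
    by (simp only: sum.swap[where A = V])
  also have "\<dots> = (\<Sum>g1\<in>supp a. \<Sum>g2\<in>supp b. \<Sum>g3\<in>supp c.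
      if tgt g1 = src g2 \<and> tgt g2 = src g3 \<and> cmp (cmp g3 g2) g1 = h then a g1 * b g2 * c g3 else 0)"
    apply (intro sum.cong refl)
    subgoal for g1 g2 g3
      using KMor_supp[OF b, of g2] KMor_supp[OF c, of g3]
      by (subst sum_if_unique[OF fin(4), of "cmp g3 g2"]) (auto simp: V_def src_cmp)
    done
  finally show ?thesis .
qed

lemma kmult_assoc:
  fixes a b c :: "'m \<Rightarrow> 'k::comm_ring_1"
  assumes a: "a \<in> KMor" and b: "b \<in> KMor" and c: "c \<in> KMor"
  shows "a \<star> b \<star> c = a \<star> (b \<star> c)"
proof
  fix h
  show "(a \<star> b \<star> c) h = (a \<star> (b \<star> c)) h"
    unfolding kmult_kmult_eq_sum_left[OF assms] kmult_kmult_eq_sum_right[OF assms]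
    using KMor_supp[OF a] KMor_supp[OF b] KMor_supp[OF c] by (intro sum.cong refl) (auto simp: cmp_assoc)
qed

lemma delta_in_R: "g \<in> hom Mor src tgt p0 p1 \<Longrightarrow> (\<lambda>x. if x = g then 1 else 0) \<in> R p0 p1"
  by (auto simp: KG_def supp_def intro: finite_subset[of _ "{g}"])

lemma delta_kmult_delta:
  assumes "tgt f = src g"
  shows "(\<lambda>x. if x = f then 1 else 0) \<star> (\<lambda>x. if x = g then 1 else 0) =
    (\<lambda>x. if x = cmp g f then 1 else (0 :: 'k::comm_ring_1))"
proof
  fix h
  show "((\<lambda>x. if x = f then 1 else 0) \<star> (\<lambda>x. if x = g then 1 else 0)) h =
      (if h = cmp g f then 1 else (0 :: 'k))"
    by (subst kmult_eq_sum[of "{f}" "{g}"]) (use assms in \<open>auto simp: supp_def\<close>)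
qed

lemma kunit_in_R: "p \<in> Obj \<Longrightarrow> kunit ide p \<in> R p p"
  unfolding kunit_def by (rule delta_in_R) (simp add: hom_def ide_in_Mor src_ide tgt_ide)

lemma kunit_kmult:
  fixes a :: "'m \<Rightarrow> 'k::comm_ring_1"
  assumes p0: "p0 \<in> Obj" and a: "a \<in> R p0 p1"
  shows "kunit ide p0 \<star> a = a"
proof
  fix h
  have "(kunit ide p0 \<star> a) h = (\<Sum>g\<in>supp a. if cmp g (ide p0) = h then a g else 0)"
    using finite_supp_R[OF a] supp_R[OF a] p0
    by (subst kmult_eq_sum[of "{ide p0}" "supp a"]) (auto simp: kunit_def supp_def tgt_ide intro!: sum.cong)
  also have "\<dots> = (\<Sum>g\<in>supp a. if g = h then a g else 0)"
    using supp_R[OF a] cmp_ide_src by (intro sum.cong) fastforce+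
  also have "\<dots> = a h"
    using finite_supp_R[OF a] by (simp add: supp_def)
  finally show "(kunit ide p0 \<star> a) h = a h" .
qed

lemma kmult_kunit:
  fixes a :: "'m \<Rightarrow> 'k::comm_ring_1"
  assumes p1: "p1 \<in> Obj" and a: "a \<in> R p0 p1"
  shows "a \<star> kunit ide p1 = a"
proof
  fix h
  have "(a \<star> kunit ide p1) h = (\<Sum>g\<in>supp a. if cmp (ide p1) g = h then a g else 0)"
    using finite_supp_R[OF a] supp_R[OF a] p1
    by (subst kmult_eq_sum[of "supp a" "{ide p1}"]) (auto simp: kunit_def supp_def src_ide intro!: sum.cong)
  also have "\<dots> = (\<Sum>g\<in>supp a. if g = h then a g else 0)"
    using supp_R[OF a] cmp_ide_tgt by (intro sum.cong) fastforce+
  also have "\<dots> = a h"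
    using finite_supp_R[OF a] by (simp add: supp_def)
  finally show "(a \<star> kunit ide p1) h = a h" .
qed

lemma exists_inverse_units:
  assumes "hom Mor src tgt p0 p1 \<noteq> {}"
  obtains e e' :: "'m \<Rightarrow> 'k::comm_ring_1"
  where "e \<in> R p0 p1" "e' \<in> R p1 p0" "e \<star> e' = kunit ide p0" "e' \<star> e = kunit ide p1"
proof -
  obtain f where f: "f \<in> Mor" "src f = p0" "tgt f = p1"
    using assms by (auto simp: hom_def)
  then obtain f' where f': "f' \<in> Mor" "src f' = p1" "tgt f' = p0" "cmp f' f = ide p0" "cmp f f' = ide p1"
    using inverse_exists by metis
  show thesis
    by (rule that[of "\<lambda>x. if x = f then 1 else 0" "\<lambda>x. if x = f' then 1 else 0"])
      (use f f' in \<open>auto simp: kunit_def delta_kmult_delta hom_def intro!: delta_in_R\<close>)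
qed

lemma kmult_cancel_left:
  fixes e e' x :: "'m \<Rightarrow> 'k::comm_ring_1"
  assumes "p1 \<in> Obj" "e \<in> KMor" "e' \<in> KMor" "e' \<star> e = kunit ide p1" "x \<in> R p1 p2"
  shows "e' \<star> (e \<star> x) = x"
  using assms by (simp add: kmult_assoc[symmetric] R_subset_KMor kunit_kmult)

lemma aug_kmult:
  fixes a b :: "'m \<Rightarrow> 'k::comm_ring_1"
  assumes a: "a \<in> R p0 p1" and b: "b \<in> R p1 p2"
  shows "aug (a \<star> b) = aug a * aug b"
proof -
  define U where "U = (\<lambda>(g1, g2). cmp g2 g1) ` (supp a \<times> supp b)"
  have fin: "finite (supp a)" "finite (supp b)" "finite U"
    using a b by (simp_all add: finite_supp_R U_def)
  have "aug (a \<star> b) = (\<Sum>h\<in>U. \<Sum>g1\<in>supp a. \<Sum>g2\<in>supp b.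
      if tgt g1 = src g2 \<and> cmp g2 g1 = h then a g1 * b g2 else 0)"
    using supp_kmult_subset[of src tgt cmp a b]
    by (simp add: aug_eq_sum[OF fin(3)] kmult_eq_sum[OF fin(1,2)] U_def)
  also have "\<dots> = (\<Sum>g1\<in>supp a. \<Sum>g2\<in>supp b. \<Sum>h\<in>U.
      if tgt g1 = src g2 \<and> cmp g2 g1 = h then a g1 * b g2 else 0)"
    by (simp only: sum.swap[where A = U])
  also have "\<dots> = (\<Sum>g1\<in>supp a. \<Sum>g2\<in>supp b. a g1 * b g2)"
    apply (intro sum.cong refl)
    subgoal for g1 g2
      using supp_R[OF a, of g1] supp_R[OF b, of g2]
      by (subst sum_if_unique[OF fin(3), of "cmp g2 g1"]) (auto simp: U_def)
    done
  also have "\<dots> = aug a * aug b"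
    by (simp add: aug_def sum_product)
  finally show ?thesis .
qed

subsection \<open>Powers of the augmentation ideal\<close>

abbreviation I :: "'o \<Rightarrow> ('m \<Rightarrow> 'k::comm_ring_1) set" where
  "I \<equiv> aug_ideal Mor src tgt"

abbreviation I_pow :: "'o \<Rightarrow> nat \<Rightarrow> ('m \<Rightarrow> 'k::comm_ring_1) set" where
  "I_pow \<equiv> aug_ideal_pow Mor src tgt cmp"

lemma aug_ideal_subset_R: "I q \<subseteq> R q q"
  by (auto simp: aug_ideal_def)

lemma aug_ideal_zero: "(\<lambda>_. 0) \<in> I q"
  by (simp add: aug_ideal_def aug_def R_zero)

lemma aug_ideal_add: "x \<in> I q \<Longrightarrow> y \<in> I q \<Longrightarrow> (\<lambda>g. x g + y g) \<in> I q"
  using finite_supp_R[of x q q] finite_supp_R[of y q q] by (simp add: aug_ideal_def aug_add R_add)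

lemma aug_ideal_uminus: "x \<in> I q \<Longrightarrow> (\<lambda>g. - x g) \<in> I q"
  by (simp add: aug_ideal_def aug_uminus R_uminus)

lemma kmult_aug_ideal_left: "w \<in> R q q \<Longrightarrow> z \<in> I q \<Longrightarrow> w \<star> z \<in> I q"
  using aug_kmult[of w q q z q] R_kmult[of w q q z q] by (simp add: aug_ideal_def)

lemma aug_ideal_kmult_right: "z \<in> I q \<Longrightarrow> w \<in> R q q \<Longrightarrow> z \<star> w \<in> I q"
  using aug_kmult[of z q q w q] R_kmult[of z q q w q] by (simp add: aug_ideal_def)

lemma aug_ideal_pow_subset_R: "I_pow q n \<subseteq> R q q"
proof (induction n)
  case (Suc n)
  then show ?case
    unfolding aug_ideal_pow.simps
    using aug_ideal_subset_R by (intro add_span_minimal) (auto intro: R_zero R_add R_uminus R_kmult)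
qed simp

lemma aug_ideal_pow_zero: "(\<lambda>_. 0) \<in> I_pow q n"
  by (cases n) (auto intro: R_zero add_span.zero)

lemma aug_ideal_pow_add: "x \<in> I_pow q n \<Longrightarrow> y \<in> I_pow q n \<Longrightarrow> (\<lambda>g. x g + y g) \<in> I_pow q n"
  by (cases n) (auto intro: R_add add_span.add)

lemma aug_ideal_pow_uminus: "x \<in> I_pow q n \<Longrightarrow> (\<lambda>g. - x g) \<in> I_pow q n"
  by (cases n) (auto intro: R_uminus add_span.neg)

lemma finite_supp_aug_ideal_pow: "x \<in> I_pow q n \<Longrightarrow> finite (supp x)"
  using aug_ideal_pow_subset_R finite_supp_R by blast

lemma finite_supp_aug_ideal: "z \<in> I q \<Longrightarrow> finite (supp z)"
  by (simp add: aug_ideal_def KG_def)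

lemma aug_ideal_in_KMor: "z \<in> I q \<Longrightarrow> z \<in> KMor"
  using aug_ideal_subset_R R_subset_KMor by blast

lemma aug_ideal_pow_in_KMor: "x \<in> I_pow q n \<Longrightarrow> x \<in> KMor"
  using aug_ideal_pow_subset_R R_subset_KMor by blast

lemma aug_ideal_pow_kmult_right:
  fixes x w :: "'m \<Rightarrow> 'k::comm_ring_1"
  assumes x: "x \<in> I_pow q n" and w: "w \<in> R q q"
  shows "x \<star> w \<in> I_pow q n"
proof (cases n)
  case 0
  then show ?thesis using x w by (simp add: R_kmult)
next
  case (Suc m)
  show ?thesis
    using x unfolding Suc aug_ideal_pow.simps
  proof (rule add_span_image[OF finsupp_additive_kmult_left[OF finite_supp_R[OF w]]])
    fix y :: "'m \<Rightarrow> 'k" assume "y \<in> {u \<star> z |u z. u \<in> I_pow q m \<and> z \<in> I q}"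
    then obtain u z where y: "y = u \<star> z" and u: "u \<in> I_pow q m" and z: "z \<in> I q"
      by blast
    then show "finite (supp y)"
      by (simp add: finite_supp_kmult finite_supp_aug_ideal_pow finite_supp_aug_ideal)
    have "y \<star> w = u \<star> (z \<star> w)"
      using aug_ideal_pow_in_KMor[OF u] aug_ideal_in_KMor[OF z] R_subset_KMor[OF w]
      by (simp add: y kmult_assoc)
    then show "y \<star> w \<in> add_span {u \<star> z |u z. u \<in> I_pow q m \<and> z \<in> I q}"
      using u aug_ideal_kmult_right[OF z w] by (auto intro: add_span.gen)
  qed
qed

lemma aug_ideal_pow_scale:
  fixes x :: "'m \<Rightarrow> 'k::comm_ring_1"
  assumes q: "q \<in> Obj" and x: "x \<in> I_pow q n"
  shows "(\<lambda>g. c * x g) \<in> I_pow q n"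
proof -
  have xR: "x \<in> R q q"
    using x aug_ideal_pow_subset_R by blast
  have "(\<lambda>g. c * x g) = x \<star> (\<lambda>g. c * kunit ide q g)"
    by (simp add: kmult_scale_right finite_supp_R[OF xR] finite_supp_R[OF kunit_in_R[OF q]]
        kmult_kunit[OF q xR])
  then show ?thesis
    using aug_ideal_pow_kmult_right[OF x R_scale[OF kunit_in_R[OF q]]] by simp
qed

lemma aug_ideal_pow_Suc_subset: "I_pow q (Suc n) \<subseteq> I_pow q n"
  unfolding aug_ideal_pow.simps
  using aug_ideal_subset_R
  by (intro add_span_minimal)
    (auto intro: aug_ideal_pow_zero aug_ideal_pow_add aug_ideal_pow_uminus aug_ideal_pow_kmult_right)

lemma aug_ideal_pow_1:
  assumes q: "q \<in> Obj" shows "I_pow q 1 = I q"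
proof
  show "I_pow q 1 \<subseteq> I q"
    unfolding One_nat_def aug_ideal_pow.simps
    by (rule add_span_minimal)
      (auto intro: aug_ideal_zero aug_ideal_add aug_ideal_uminus kmult_aug_ideal_left)
  show "I q \<subseteq> I_pow q 1"
  proof
    fix z assume z: "z \<in> I q"
    have "kunit ide q \<star> z \<in> {x \<star> y |x y. x \<in> I_pow q 0 \<and> y \<in> I q}"
      using z kunit_in_R[OF q] by auto
    moreover have "kunit ide q \<star> z = z"
      using z aug_ideal_subset_R by (blast intro: kunit_kmult[OF q])
    ultimately show "z \<in> I_pow q 1"
      by (auto intro: add_span.gen)
  qed
qed

lemma aug_ideal_pow_kmult:
  fixes x y :: "'m \<Rightarrow> 'k::comm_ring_1"
  assumes x: "x \<in> I_pow q n1"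
  shows "y \<in> I_pow q n2 \<Longrightarrow> x \<star> y \<in> I_pow q (n1 + n2)"
proof (induction n2 arbitrary: y)
  case 0
  then show ?case
    using x aug_ideal_pow_kmult_right by (simp add: aug_ideal_pow_subset_R[THEN subsetD])
next
  case (Suc m)
  show ?case
    using Suc.prems unfolding add_Suc_right aug_ideal_pow.simps
  proof (rule add_span_image[OF finsupp_additive_kmult_right[OF finite_supp_aug_ideal_pow[OF x]]])
    fix y :: "'m \<Rightarrow> 'k" assume "y \<in> {u \<star> z |u z. u \<in> I_pow q m \<and> z \<in> I q}"
    then obtain u z where y: "y = u \<star> z" and u: "u \<in> I_pow q m" and z: "z \<in> I q"
      by blast
    then show "finite (supp y)"
      by (simp add: finite_supp_kmult finite_supp_aug_ideal_pow finite_supp_aug_ideal)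
    have "x \<star> y = x \<star> u \<star> z"
      using aug_ideal_pow_in_KMor[OF x] aug_ideal_pow_in_KMor[OF u] aug_ideal_in_KMor[OF z]
      by (simp add: y kmult_assoc)
    then show "x \<star> y \<in> add_span {v \<star> z |v z. v \<in> I_pow q (n1 + m) \<and> z \<in> I q}"
      using Suc.IH[OF u] z by (auto intro: add_span.gen)
  qed
qed

lemma kmult_aug_ideal_kmult:
  assumes e: "e \<in> R p0 p1" and z: "z \<in> I p1" and e': "e' \<in> R p1 p0"
  shows "e \<star> z \<star> e' \<in> I p0"
proof -
  have zR: "z \<in> R p1 p1"
    using z aug_ideal_subset_R by blast
  show ?thesis
    using z aug_kmult[OF R_kmult[OF e zR] e'] aug_kmult[OF e zR] R_kmult[OF R_kmult[OF e zR] e']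
    by (simp add: aug_ideal_def)
qed

lemma aug_ideal_pow_conj:
  fixes e e' :: "'m \<Rightarrow> 'k::comm_ring_1"
  assumes p1: "p1 \<in> Obj" and e: "e \<in> R p0 p1" and e': "e' \<in> R p1 p0"
    and inv: "e' \<star> e = kunit ide p1"
  shows "x \<in> I_pow p1 n \<Longrightarrow> e \<star> x \<star> e' \<in> I_pow p0 n"
proof (induction n arbitrary: x)
  case 0
  then show ?case
    using e e' by (simp add: R_kmult[OF R_kmult[OF e]])
next
  case (Suc n)
  have additive: "finsupp_additive (\<lambda>x. e \<star> x \<star> e')"
    using finite_supp_R[OF e] finite_supp_R[OF e']
    by (simp add: finsupp_additive_def kmult_add_left kmult_add_right finite_supp_kmult)
  show ?case
    using Suc.prems unfolding aug_ideal_pow.simps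
  proof (rule add_span_image[OF additive])
    fix y :: "'m \<Rightarrow> 'k" assume "y \<in> {u \<star> z |u z. u \<in> I_pow p1 n \<and> z \<in> I p1}"
    then obtain u z where y: "y = u \<star> z" and u: "u \<in> I_pow p1 n" and z: "z \<in> I p1"
      by blast
    then show "finite (supp y)"
      by (simp add: finite_supp_kmult finite_supp_aug_ideal_pow finite_supp_aug_ideal)
    have zR: "z \<in> R p1 p1"
      using z aug_ideal_subset_R by blast
    have "e' \<star> (e \<star> (z \<star> e')) = z \<star> e'"
      by (rule kmult_cancel_left[OF p1 R_subset_KMor[OF e] R_subset_KMor[OF e'] inv R_kmult[OF zR e']])
    then have "e \<star> y \<star> e' = (e \<star> u \<star> e') \<star> (e \<star> z \<star> e')"
      using R_subset_KMor[OF e] R_subset_KMor[OF e'] aug_ideal_pow_in_KMor[OF u] aug_ideal_in_KMor[OF z]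
      by (simp add: y kmult_assoc KMor_kmult)
    then show "e \<star> y \<star> e' \<in> add_span {v \<star> z |v z. v \<in> I_pow p0 n \<and> z \<in> I p0}"
      using Suc.IH[OF u] kmult_aug_ideal_kmult[OF e z e'] by (auto intro: add_span.gen)
  qed
qed

lemma foldr_kmult_in_R:
  "set xs \<subseteq> R q q \<Longrightarrow> z \<in> R q q \<Longrightarrow> foldr (\<star>) xs z \<in> R q q"
  by (induction xs) (auto intro: R_kmult)

lemma foldr_kmult_kunit_kmult:
  fixes z :: "'m \<Rightarrow> 'k::comm_ring_1"
  assumes q: "q \<in> Obj" and xs: "set xs \<subseteq> R q q" and z: "z \<in> R q q"
  shows "foldr (\<star>) xs (kunit ide q) \<star> z = foldr (\<star>) xs z"
  using xs
proof (induction xs)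
  case Nil
  then show ?case using kunit_kmult[OF q z] by simp
next
  case (Cons x xs)
  have "x \<in> KMor" "foldr (\<star>) xs (kunit ide q) \<in> KMor" "z \<in> KMor"
    using Cons.prems foldr_kmult_in_R[OF _ kunit_in_R[OF q], of xs] z by (auto intro: R_subset_KMor)
  then show ?case
    using Cons by (simp add: kmult_assoc)
qed

definition aug_products :: "'o \<Rightarrow> nat \<Rightarrow> ('m \<Rightarrow> 'k::comm_ring_1) set" where
  "aug_products q n = {foldr (\<star>) xs (kunit ide q) | xs. length xs = n \<and> set xs \<subseteq> I q}"

lemma aug_products_subset_R: "q \<in> Obj \<Longrightarrow> aug_products q n \<subseteq> R q q"
  using aug_ideal_subset_R by (auto simp: aug_products_def intro!: foldr_kmult_in_R kunit_in_R)

lemma aug_products_kmult: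
  assumes q: "q \<in> Obj" and y: "y \<in> aug_products q n" and z: "z \<in> I q"
  shows "y \<star> z \<in> aug_products q (Suc n)"
proof -
  obtain xs where xs: "y = foldr (\<star>) xs (kunit ide q)" "length xs = n" "set xs \<subseteq> I q"
    using y by (auto simp: aug_products_def)
  have zR: "z \<in> R q q"
    using z aug_ideal_subset_R by blast
  have "set xs \<subseteq> R q q"
    using xs(3) aug_ideal_subset_R by blast
  then have "y \<star> z = foldr (\<star>) xs z"
    using foldr_kmult_kunit_kmult[OF q _ zR] xs(1) by simp
  also have "\<dots> = foldr (\<star>) (xs @ [z]) (kunit ide q)"
    using kmult_kunit[OF q zR] by simp
  finally show ?thesis
    using xs z by (auto simp: aug_products_def intro!: exI[of _ "xs @ [z]"])
qed

lemma aug_ideal_pow_subset_products: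
  assumes q: "q \<in> Obj"
  shows "(I_pow q (Suc n) :: ('m \<Rightarrow> 'k::comm_ring_1) set) \<subseteq> add_span (aug_products q (Suc n))"
proof (induction n)
  case 0
  have "x \<in> aug_products q 1" if "x \<in> I q" for x :: "'m \<Rightarrow> 'k"
  proof -
    have "x \<star> kunit ide q = x"
      using that aug_ideal_subset_R kmult_kunit[OF q] by blast
    then show ?thesis
      using that by (auto simp: aug_products_def intro!: exI[of _ "[x]"])
  qed
  then show ?case
    using aug_ideal_pow_1[OF q] by (auto intro: add_span.gen)
next
  case (Suc n)
  have "u \<star> z \<in> add_span (aug_products q (Suc (Suc n)))"
    if u: "u \<in> I_pow q (Suc n)" and z: "z \<in> I q" for u z :: "'m \<Rightarrow> 'k"
  proof (rule add_span_image[OF finsupp_additive_kmult_left[OF finite_supp_aug_ideal[OF z]]])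
    show "u \<in> add_span (aug_products q (Suc n))"
      using Suc.IH u by blast
    show "finite (supp y)" if "y \<in> aug_products q (Suc n)" for y
      using that aug_products_subset_R[OF q] finite_supp_R by blast
    show "y \<star> z \<in> add_span (aug_products q (Suc (Suc n)))" if "y \<in> aug_products q (Suc n)" for y
      using aug_products_kmult[OF q that z] by (rule add_span.gen)
  qed
  then show ?case
    unfolding aug_ideal_pow.simps(2)[where n = "Suc n"]
    by (intro add_span_minimal) (auto intro: add_span.zero add_span.add add_span.neg)
qed

subsection \<open>The filtration\<close>

definition filtration :: "nat \<Rightarrow> 'o \<Rightarrow> 'o \<Rightarrow> ('m \<Rightarrow> 'k::comm_ring_1) set" where
  "filtration n p0 p1 = {a \<in> R p0 p1. \<forall>b \<in> R p1 p0. a \<star> b \<in> I_pow p0 n}"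

lemma filtration_diag:
  assumes q: "q \<in> Obj" shows "filtration n q q = I_pow q n"
proof
  show "filtration n q q \<subseteq> I_pow q n"
    using kunit_in_R[OF q] kmult_kunit[OF q] by (fastforce simp: filtration_def)
  show "I_pow q n \<subseteq> filtration n q q"
    using aug_ideal_pow_subset_R aug_ideal_pow_kmult_right by (fastforce simp: filtration_def)
qed

lemma filtration_0: "filtration 0 p0 p1 = R p0 p1"
  by (auto simp: filtration_def intro: R_kmult)

lemma filtration_Suc_subset: "filtration (Suc n) p0 p1 \<subseteq> filtration n p0 p1"
  using aug_ideal_pow_Suc_subset by (fastforce simp: filtration_def)

lemma filtration_submodule:
  assumes p0: "p0 \<in> Obj"
  shows "is_submodule (filtration n p0 p1 :: ('m \<Rightarrow> 'k::comm_ring_1) set) (R p0 p1)"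
  unfolding is_submodule_def
proof (intro conjI ballI allI)
  show "filtration n p0 p1 \<subseteq> R p0 p1"
    by (auto simp: filtration_def)
  show "(\<lambda>_. 0) \<in> filtration n p0 p1"
    by (simp add: filtration_def R_zero aug_ideal_pow_zero)
next
  fix x y :: "'m \<Rightarrow> 'k" assume "x \<in> filtration n p0 p1" "y \<in> filtration n p0 p1"
  then show "(\<lambda>g. x g + y g) \<in> filtration n p0 p1"
    by (auto simp: filtration_def kmult_add_left finite_supp_R intro!: R_add aug_ideal_pow_add)
next
  fix c and x :: "'m \<Rightarrow> 'k" assume "x \<in> filtration n p0 p1"
  then show "(\<lambda>g. c * x g) \<in> filtration n p0 p1"
    by (auto simp: filtration_def kmult_scale_left finite_supp_R intro!: R_scale aug_ideal_pow_scale[OF p0])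
qed

lemma filtration_kmult:
  fixes a a' :: "'m \<Rightarrow> 'k::comm_ring_1"
  assumes p0: "p0 \<in> Obj" and p1: "p1 \<in> Obj"
    and a: "a \<in> filtration n1 p0 p1" and a': "a' \<in> filtration n2 p1 p2"
  shows "a \<star> a' \<in> filtration (n1 + n2) p0 p2"
proof -
  have aR: "a \<in> R p0 p1" and a'R: "a' \<in> R p1 p2"
    using a a' by (auto simp: filtration_def)
  have "a \<star> a' \<star> b \<in> I_pow p0 (n1 + n2)" if b: "b \<in> R p2 p0" for b
  proof (cases "hom Mor src tgt p0 p1 = {}")
    case True
    then show ?thesis
      using R_eq_zero_if_hom_empty[OF _ aR] by (simp add: aug_ideal_pow_zero)
  next
    case False
    then obtain e e' :: "'m \<Rightarrow> 'k" where e: "e \<in> R p0 p1" and e': "e' \<in> R p1 p0"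
      and ee': "e \<star> e' = kunit ide p0" and e'e: "e' \<star> e = kunit ide p1"
      by (rule exists_inverse_units)
    have in_KMor: "a \<in> KMor" "a' \<in> KMor" "b \<in> KMor" "e \<in> KMor" "e' \<in> KMor"
      using aR a'R b e e' by (blast intro: R_subset_KMor)+
    have "e' \<star> (e \<star> (a' \<star> b)) = a' \<star> b"
      by (rule kmult_cancel_left[OF p1 in_KMor(4,5) e'e R_kmult[OF a'R b]])
    then have "a \<star> a' \<star> b = (a \<star> e') \<star> (e \<star> (a' \<star> (b \<star> e)) \<star> e')"
      using in_KMor by (simp add: kmult_assoc KMor_kmult ee' kmult_kunit[OF p0 b])
    moreover have "a \<star> e' \<in> I_pow p0 n1"
      using a e' by (simp add: filtration_def)
    moreover have "e \<star> (a' \<star> (b \<star> e)) \<star> e' \<in> I_pow p0 n2"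
      using a' R_kmult[OF b e] by (intro aug_ideal_pow_conj[OF p1 e e' e'e]) (simp add: filtration_def)
    ultimately show ?thesis
      by (simp add: aug_ideal_pow_kmult)
  qed
  then show ?thesis
    using R_kmult[OF aR a'R] by (simp add: filtration_def)
qed

lemma is_filtration_filtration: "is_filtration Obj Mor src tgt cmp filtration"
  unfolding is_filtration_def
  by (simp add: filtration_0 filtration_submodule filtration_Suc_subset filtration_kmult)

lemma aug_kunit: "aug (kunit ide q) = 1"
  by (subst aug_eq_sum[of "{ide q}"]) (auto simp: kunit_def supp_def)

lemma cond_C1_filtration: "cond_C1 Obj Mor src tgt filtration"
  unfolding cond_C1_def
proof (intro ballI exI[of _ aug] conjI allI)
  fix q assume q: "q \<in> Obj"
  show "aug (\<lambda>g. x g + y g) = aug x + aug y" if "x \<in> R q q" "y \<in> R q q" for x y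
    using that by (simp add: aug_add finite_supp_R)
  show "aug (\<lambda>g. c * x g) = c * aug x" if "x \<in> R q q" for c x
    using that by (simp add: aug_scale finite_supp_R)
  show "aug ` R q q = UNIV"
  proof (intro set_eqI iffI)
    fix c
    have "aug (\<lambda>g. c * kunit ide q g) = c"
      using aug_scale[OF finite_supp_R[OF kunit_in_R[OF q]]] by (simp add: aug_kunit)
    then show "c \<in> aug ` R q q"
      using R_scale[OF kunit_in_R[OF q]] by (metis image_eqI)
  qed simp
  show "{x \<in> R q q. aug x = 0} = filtration 1 q q"
    unfolding filtration_diag[OF q] aug_ideal_pow_1[OF q] aug_ideal_def ..
qed

lemma cond_C4_filtration: "cond_C4 Obj src tgt cmp ide filtration"
  unfolding cond_C4_def
proof (intro ballI allI impI)
  fix q and n :: nat assume q: "q \<in> Obj" and n: "1 \<le> n"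
  then obtain m where "n = Suc m"
    using not0_implies_Suc by fastforce
  then show "filtration n q q \<subseteq> add_span {foldr (\<star>) xs (kunit ide q) |xs. length xs = n \<and> set xs \<subseteq> filtration 1 q q}"
    unfolding filtration_diag[OF q] aug_ideal_pow_1[OF q]
    using aug_ideal_pow_subset_products[OF q, of m] by (simp only: aug_products_def)
qed

end

theorem proposition2p1p1:
  fixes Obj :: "'o set" and Mor :: "'m set" and src tgt :: "'m \<Rightarrow> 'o"
    and cmp :: "'m \<Rightarrow> 'm \<Rightarrow> 'm" and ide :: "'o \<Rightarrow> 'm"
  assumes "groupoid Obj Mor src tgt cmp ide"
  shows "\<exists>F :: nat \<Rightarrow> 'o \<Rightarrow> 'o \<Rightarrow> ('m \<Rightarrow> 'k::comm_ring_1) set.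
           is_filtration Obj Mor src tgt cmp F \<and>
           (\<forall>q\<in>Obj. \<forall>n. F n q q = aug_ideal_pow Mor src tgt cmp q n) \<and>
           cond_C1 Obj Mor src tgt F \<and>
           cond_C4 Obj src tgt cmp ide F"
proof -
  interpret small_groupoid Obj Mor src tgt cmp ide
    by unfold_locales (rule assms)
  show ?thesis
    using is_filtration_filtration filtration_diag cond_C1_filtration cond_C4_filtration by blast
qed

end
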